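(* Let $(M,d)$ be a pointed metric space with $d(x,y)\in\mathbb N\cup\{0\}$ for all $x,y\in M$, and let $A\subseteq\widetilde M$ be cyclically monotonic. Then there exists $f\in B_{\mathrm{Lip}_0(M)}$ such that $f(x)\in\mathbb Z$ for all $x\in M$ and $f(m_{x,y})=1$ for all $(x,y)\in A$.
   Context: $M$ has base point $0$; $\mathrm{Lip}_0(M)$ is the real Banach space of Lipschitz $f\colon M\to\mathbb R$ with $f(0)=0$, normed by the best Lipschitz constant, with unit ball $B_{\mathrm{Lip}_0(M)}$. $\widetilde M=\{(x,y)\in M\times M:x\ne y\}$ and $f(m_{x,y})=(f(x)-f(y))/d(x,y)$. $A\subseteq\widetilde M$ is cyclically monotonic if for every finite sequence $(x_1,y_1),\dots,(x_n,y_n)\in A$, with $y_{n+1}=y_1$, $\sum_i d(x_i,y_{i+1})\ge\sum_i d(x_i,y_i)$. *)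

theory Defs
  imports "HOL-Analysis.Analysis"
begin

definition pairs_distinct :: "('a \<times> 'a) set" where
  "pairs_distinct = {(x, y). x \<noteq> y}"

text \<open>Evaluation of f at the molecule m_{x,y}.\<close>
definition mol_eval :: "('a::metric_space \<Rightarrow> real) \<Rightarrow> 'a \<Rightarrow> 'a \<Rightarrow> real" where
  "mol_eval f x y = (f x - f y) / dist x y"

text \<open>Cyclic monotonicity: for every finite nonempty sequence (x_1,y_1),...,(x_n,y_n) in A,
  with y_{n+1} = y_1, sum d(x_i, y_{i+1}) >= sum d(x_i, y_i). Indices are 0..n-1 here.\<close>
definition cyclically_monotonic :: "('a::metric_space \<times> 'a) set \<Rightarrow> bool" where
  "cyclically_monotonic A \<longleftrightarrow>
     A \<subseteq> pairs_distinct \<and>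
     (\<forall>n::nat. \<forall>p :: nat \<Rightarrow> 'a \<times> 'a. n \<ge> 1 \<longrightarrow> (\<forall>i<n. p i \<in> A) \<longrightarrow>
        (\<Sum>i<n. dist (fst (p i)) (snd (p i))) \<le> (\<Sum>i<n. dist (fst (p i)) (snd (p (Suc i mod n)))))"

end

theory Submission
  imports Defs
begin

(* Rockafellar's construction of a potential for a cyclically monotone relation.  Fix
   (x0, y0) in A and let g z be the infimum, over chains (x_1, y_1), ..., (x_n, y_n) in A
   followed by (x0, y0), of d(z, y_1) + sum_(i=1..n) (d(x_i, y_(i+1)) - d(x_i, y_i)) with
   y_(n+1) = y0.  Closing such a chain into a cycle through (x0, y0) and using cyclic
   monotonicity bounds these costs below by d(x0, y0) - d(z, x0), so g is finite.  Moving the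
   starting point costs at most the distance moved, so g is 1-Lipschitz; prepending a pair
   (x, y) of A shows g y + d(x, y) <= g x, hence g x - g y = d(x, y) on A.  For integer
   distances all costs are integers, so the infimum is attained and g is integer-valued. *)

lemma Inf_mem_Ints:
  fixes S :: "real set"
  assumes "S \<subseteq> \<int>" "S \<noteq> {}" "bdd_below S"
  shows "Inf S \<in> S"
proof -
  obtain s where s: "s \<in> S" "s < Inf S + 1"
    using cInf_lessD[OF assms(2), of "Inf S + 1"] by auto
  have "s \<le> t" if "t \<in> S" for t
  proof -
    obtain a b where "s = of_int a" "t = of_int b"
      using assms(1) s(1) \<open>t \<in> S\<close> by (metis Ints_cases subsetD)
    moreover have "s < t + 1"
      using s(2) cInf_lower[OF \<open>t \<in> S\<close> assms(3)] by linarith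
    ultimately show ?thesis by simp
  qed
  then have "s \<le> Inf S" by (rule cInf_greatest[OF assms(2)])
  with cInf_lower[OF s(1) assms(3)] s(1) show ?thesis by simp
qed

lemma cyclically_monotonicD:
  assumes "cyclically_monotonic A" "\<forall>i<n. p i \<in> A" "n \<ge> 1"
  shows "(\<Sum>i<n. dist (fst (p i)) (snd (p i))) \<le> (\<Sum>i<n. dist (fst (p i)) (snd (p (Suc i mod n))))"
  using assms unfolding cyclically_monotonic_def by blast

definition chain_costs :: "('a::metric_space \<times> 'a) set \<Rightarrow> 'a \<Rightarrow> 'a \<Rightarrow> 'a \<Rightarrow> real set" where
  "chain_costs A x0 y0 z = {dist z (snd (p 0)) +
     (\<Sum>i<n. dist (fst (p i)) (snd (p (Suc i))) - dist (fst (p i)) (snd (p i))) | n p.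
       (\<forall>i<n. p i \<in> A) \<and> p n = (x0, y0)}"

definition chain_potential :: "('a::metric_space \<times> 'a) set \<Rightarrow> 'a \<Rightarrow> 'a \<Rightarrow> 'a \<Rightarrow> real" where
  "chain_potential A x0 y0 z = Inf (chain_costs A x0 y0 z)"

lemma dist_in_chain_costs: "dist z y0 \<in> chain_costs A x0 y0 z"
  unfolding chain_costs_def by (auto intro!: exI[of _ 0] exI[of _ "\<lambda>_. (x0, y0)"])

lemma chain_costs_nonempty: "chain_costs A x0 y0 z \<noteq> {}"
  using dist_in_chain_costs by blast

lemma chain_costs_lower_bound:
  assumes "cyclically_monotonic A" "(x0, y0) \<in> A" "v \<in> chain_costs A x0 y0 z"
  shows "dist x0 y0 - dist z x0 \<le> v"
proof -
  from assms(3) obtain n p where p: "\<forall>i<n. p i \<in> A" "p n = (x0, y0)"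
    and v: "v = dist z (snd (p 0)) +
      (\<Sum>i<n. dist (fst (p i)) (snd (p (Suc i))) - dist (fst (p i)) (snd (p i)))"
    unfolding chain_costs_def by blast
  have "\<forall>i<Suc n. p i \<in> A"
    using p assms(2) less_Suc_eq by auto
  then have "(\<Sum>i<n. dist (fst (p i)) (snd (p i))) + dist x0 y0
      \<le> (\<Sum>i<n. dist (fst (p i)) (snd (p (Suc i)))) + dist x0 (snd (p 0))"
    using cyclically_monotonicD[OF assms(1), of "Suc n" p] p(2) by simp
  moreover have "dist x0 (snd (p 0)) \<le> dist z x0 + dist z (snd (p 0))"
    by (metis dist_commute dist_triangle)
  ultimately show ?thesis
    using v by (simp add: sum_subtractf)
qed

lemma bdd_below_chain_costs:
  assumes "cyclically_monotonic A" "(x0, y0) \<in> A"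
  shows "bdd_below (chain_costs A x0 y0 z)"
  using chain_costs_lower_bound[OF assms] unfolding bdd_below_def by blast

lemma chain_costs_Ints:
  assumes "\<forall>x y :: 'a::metric_space. dist x y \<in> \<nat>"
  shows "chain_costs A x0 y0 (z::'a) \<subseteq> \<int>"
proof -
  have "dist x y \<in> \<int>" for x y :: 'a
    using assms Nats_subset_Ints by blast
  then show ?thesis
    unfolding chain_costs_def by (auto intro!: Ints_add Ints_sum Ints_diff)
qed

lemma chain_costs_move_start:
  assumes "v \<in> chain_costs A x0 y0 z"
  shows "\<exists>w \<in> chain_costs A x0 y0 z'. w \<le> v + dist z z'"
proof -
  from assms obtain n p where p: "\<forall>i<n. p i \<in> A" "p n = (x0, y0)"
    and v: "v = dist z (snd (p 0)) +
      (\<Sum>i<n. dist (fst (p i)) (snd (p (Suc i))) - dist (fst (p i)) (snd (p i)))"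
    unfolding chain_costs_def by blast
  let ?w = "dist z' (snd (p 0)) +
    (\<Sum>i<n. dist (fst (p i)) (snd (p (Suc i))) - dist (fst (p i)) (snd (p i)))"
  have "?w \<in> chain_costs A x0 y0 z'"
    unfolding chain_costs_def using p by blast
  moreover have "dist z' (snd (p 0)) \<le> dist z (snd (p 0)) + dist z z'"
    by (metis dist_commute dist_triangle)
  ultimately show ?thesis
    using v by (intro bexI[of _ ?w]) auto
qed

lemma chain_costs_prepend:
  assumes "(x, y) \<in> A" "v \<in> chain_costs A x0 y0 x"
  shows "v - dist x y \<in> chain_costs A x0 y0 y"
proof -
  from assms(2) obtain n p where p: "\<forall>i<n. p i \<in> A" "p n = (x0, y0)"
    and v: "v = dist x (snd (p 0)) +
      (\<Sum>i<n. dist (fst (p i)) (snd (p (Suc i))) - dist (fst (p i)) (snd (p i)))"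
    unfolding chain_costs_def by blast
  define q where "q i = (case i of 0 \<Rightarrow> (x, y) | Suc j \<Rightarrow> p j)" for i
  have q: "\<forall>i<Suc n. q i \<in> A" "q (Suc n) = (x0, y0)"
    using p assms(1) unfolding q_def by (auto split: nat.split)
  have "v - dist x y = dist y (snd (q 0)) +
      (\<Sum>i<Suc n. dist (fst (q i)) (snd (q (Suc i))) - dist (fst (q i)) (snd (q i)))"
    unfolding v by (simp add: sum.lessThan_Suc_shift q_def del: sum.lessThan_Suc)
  also have "\<dots> \<in> chain_costs A x0 y0 y"
    unfolding chain_costs_def using q by blast
  finally show ?thesis .
qed

context
  fixes A :: "('a::metric_space \<times> 'a) set" and x0 y0 :: 'a
  assumes cm: "cyclically_monotonic A" and x0y0: "(x0, y0) \<in> A"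
begin

lemma chain_potential_le_add_dist: "chain_potential A x0 y0 x \<le> chain_potential A x0 y0 y + dist x y"
proof -
  have "chain_potential A x0 y0 x - dist x y \<le> v" if v: "v \<in> chain_costs A x0 y0 y" for v
  proof -
    obtain w where "w \<in> chain_costs A x0 y0 x" "w \<le> v + dist y x"
      using chain_costs_move_start[OF v] by blast
    then show ?thesis
      using cInf_lower[OF _ bdd_below_chain_costs[OF cm x0y0]]
      unfolding chain_potential_def by (fastforce simp: dist_commute)
  qed
  then have "chain_potential A x0 y0 x - dist x y \<le> chain_potential A x0 y0 y"
    unfolding chain_potential_def by (intro cInf_greatest chain_costs_nonempty)
  then show ?thesis by simp
qed

lemma lipschitz_chain_potential: "1-lipschitz_on UNIV (chain_potential A x0 y0)"
proof (rule lipschitz_onI)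
  fix z z' :: 'a
  show "dist (chain_potential A x0 y0 z) (chain_potential A x0 y0 z') \<le> 1 * dist z z'"
    using chain_potential_le_add_dist[of z z'] chain_potential_le_add_dist[of z' z]
    by (simp add: dist_real_def dist_commute abs_le_iff)
qed simp

lemma chain_potential_add_dist_le:
  assumes "(x, y) \<in> A"
  shows "chain_potential A x0 y0 y + dist x y \<le> chain_potential A x0 y0 x"
proof -
  have "chain_potential A x0 y0 y \<le> v - dist x y" if "v \<in> chain_costs A x0 y0 x" for v
    unfolding chain_potential_def
    by (rule cInf_lower[OF chain_costs_prepend[OF assms that] bdd_below_chain_costs[OF cm x0y0]])
  then have "chain_potential A x0 y0 y + dist x y \<le> Inf (chain_costs A x0 y0 x)"
    by (intro cInf_greatest chain_costs_nonempty) (simp add: algebra_simps)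
  then show ?thesis
    unfolding chain_potential_def .
qed

lemma chain_potential_diff_eq_dist:
  assumes "(x, y) \<in> A"
  shows "chain_potential A x0 y0 x - chain_potential A x0 y0 y = dist x y"
  using chain_potential_add_dist_le[OF assms] chain_potential_le_add_dist[of x y]
  by (simp add: dist_commute)

lemma chain_potential_Ints:
  assumes "\<forall>x y :: 'a. dist x y \<in> \<nat>"
  shows "chain_potential A x0 y0 z \<in> \<int>"
  using Inf_mem_Ints[OF chain_costs_Ints[OF assms] chain_costs_nonempty bdd_below_chain_costs[OF cm x0y0]]
    chain_costs_Ints[OF assms]
  unfolding chain_potential_def by blast

end

theorem lemma5p1:
  fixes base :: "'a::metric_space"
    and A :: "('a \<times> 'a) set"
  assumes "\<forall>x y :: 'a. dist x y \<in> \<nat>"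
    and "cyclically_monotonic A"
  shows "\<exists>f :: 'a \<Rightarrow> real. f base = 0 \<and> 1-lipschitz_on UNIV f \<and>
           (\<forall>x. f x \<in> \<int>) \<and> (\<forall>(x, y) \<in> A. mol_eval f x y = 1)"
proof (cases "A = {}")
  case True
  then show ?thesis
    by (intro exI[of _ "\<lambda>_. 0"]) (auto intro: lipschitz_onI)
next
  case False
  then obtain x0 y0 where x0y0: "(x0, y0) \<in> A" by auto
  define g where "g = chain_potential A x0 y0"
  define f where "f z = g z - g base" for z
  have "1-lipschitz_on UNIV f"
    using lipschitz_chain_potential[OF assms(2) x0y0]
    unfolding f_def g_def lipschitz_on_def by (simp add: dist_real_def)
  moreover have "f x \<in> \<int>" for x
    using chain_potential_Ints[OF assms(2) x0y0 assms(1)] unfolding f_def g_def by auto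
  moreover have "mol_eval f x y = 1" if "(x, y) \<in> A" for x y
  proof -
    have "x \<noteq> y"
      using assms(2) that unfolding cyclically_monotonic_def pairs_distinct_def by auto
    then show ?thesis
      using chain_potential_diff_eq_dist[OF assms(2) x0y0 that]
      unfolding mol_eval_def f_def g_def by simp
  qed
  ultimately show ?thesis
    by (intro exI[of _ f]) (auto simp: f_def)
qed

end
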